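(* In System $\mathsf{F_\wedge}$, if $\Theta, X <: S \vdash t : T$, then $\Theta \vdash \Lambda (X<:\top).\,t[X\wedge S/X] : \forall X.\,T[X\wedge S/X]$.
   Context: System $\mathsf{F_\wedge}$: raw types $T ::= \top \mid X \mid T \to T \mid \forall X.T \mid T \wedge T$ ($\forall X.T$ means $\forall(X<:\top).T$), up to $\alpha$-conversion. Contexts: finite sequences of $X<:T$ or $x:T$ with distinct variables, each type well-formed over the preceding part. Subtyping rules: (Var) $\Theta,X<:T,\Theta'\vdash X<:T$; (Top) $T<:\top$; (Refl); (Trans); ($\to$) from $S'<:S$, $T<:T'$ infer $S\to T<:S'\to T'$; ($\forall$) from $\Theta,X<:\top\vdash S<:T$ infer $\Theta\vdash\forall X.S<:\forall X.T$; (meet) $S\wedge S'<:S$, $S\wedge S'<:S'$, from $T<:S$, $T<:S'$ infer $T<:S\wedge S'$. Raw terms $t ::= \mathsf{top} \mid x \mid \lambda(x:T).t \mid \Lambda(X<:T).t \mid t\,t \mid t\{T\}$. Typing rules: $\Theta\vdash\mathsf{top}:\top$; $\Theta,x:T,\Theta'\vdash x:T$; (sub) from $t:T$ and $T<:T'$ infer $t:T'$; from $\Theta,x:S\vdash t:T$ infer $\Theta\vdash\lambda(x:S).t:S\to T$; from $t:S\to T$ and $s:S$ infer $t\,s:T$; from $\Theta,X<:S\vdash t:T$ infer $\Theta\vdash\Lambda(X<:S).t:\forall(X<:S).T$; from $\Theta\vdash t:\forall(X<:S).T$ and $\Theta\vdash S'<:S$ infer $\Theta\vdash t\{S'\}:T[S'/X]$.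 $t[X\wedge S/X]$ substitutes $X \wedge S$ for $X$ in all type annotations of $t$. *)

theory Defs
  imports Main
begin

text \<open>Type variables and term variables are indexed separately: a type-variable
  index counts only the type-variable bindings (and type binders) between
  the occurrence and its binder; a term-variable index counts only term
  bindings. Index 0 is the most recently bound variable. Contexts are lists
  with the most recent binding at the head.\<close>

datatype ty = Top | TVar nat | Arr ty ty | All ty | Meet ty ty
  (* All T  represents  \<forall>X.T = \<forall>(X<:Top).T, X bound as index 0 in T *)

datatype tm = TTop | Var nat | Abs ty tm | TAbs ty tm | App tm tm | TApp tm ty

datatype bind = VarB ty | TVarB ty

type_synonym env = "bind list"

fun shift :: "nat \<Rightarrow> nat \<Rightarrow> ty \<Rightarrow> ty" where
  "shift d c Top = Top"
| "shift d c (TVar i) = TVar (if i < c then i else i + d)"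
| "shift d c (Arr S T) = Arr (shift d c S) (shift d c T)"
| "shift d c (All T) = All (shift d (Suc c) T)"
| "shift d c (Meet S T) = Meet (shift d c S) (shift d c T)"

text \<open>subst k U T: capture-avoiding substitution T[U/X] of U for the type variable
  with index k (the binder being removed), decrementing the indices above k.\<close>
fun subst :: "nat \<Rightarrow> ty \<Rightarrow> ty \<Rightarrow> ty" where
  "subst k U Top = Top"
| "subst k U (TVar i) = (if i < k then TVar i else if i = k then shift k 0 U else TVar (i - 1))"
| "subst k U (Arr S T) = Arr (subst k U S) (subst k U T)"
| "subst k U (All T) = All (subst (Suc k) U T)"
| "subst k U (Meet S T) = Meet (subst k U S) (subst k U T)"

text \<open>repl k U T: substitution T[U/X] of U for the type variable X with index k,
  where U lives in the same context as X (no binder is removed, indices unchanged).\<close>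
fun repl :: "nat \<Rightarrow> ty \<Rightarrow> ty \<Rightarrow> ty" where
  "repl k U Top = Top"
| "repl k U (TVar i) = (if i = k then shift k 0 U else TVar i)"
| "repl k U (Arr S T) = Arr (repl k U S) (repl k U T)"
| "repl k U (All T) = All (repl (Suc k) U T)"
| "repl k U (Meet S T) = Meet (repl k U S) (repl k U T)"

fun repl_tm :: "nat \<Rightarrow> ty \<Rightarrow> tm \<Rightarrow> tm" where
  "repl_tm k U TTop = TTop"
| "repl_tm k U (Var x) = Var x"
| "repl_tm k U (Abs T t) = Abs (repl k U T) (repl_tm k U t)"
| "repl_tm k U (TAbs T t) = TAbs (repl k U T) (repl_tm (Suc k) U t)"
| "repl_tm k U (App t s) = App (repl_tm k U t) (repl_tm k U s)"
| "repl_tm k U (TApp t T) = TApp (repl_tm k U t) (repl k U T)"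

fun ntv :: "env \<Rightarrow> nat" where
  "ntv [] = 0"
| "ntv (VarB T # \<Gamma>) = ntv \<Gamma>"
| "ntv (TVarB T # \<Gamma>) = Suc (ntv \<Gamma>)"

fun wf_ty :: "nat \<Rightarrow> ty \<Rightarrow> bool" where
  "wf_ty n Top = True"
| "wf_ty n (TVar i) = (i < n)"
| "wf_ty n (Arr S T) = (wf_ty n S \<and> wf_ty n T)"
| "wf_ty n (All T) = wf_ty (Suc n) T"
| "wf_ty n (Meet S T) = (wf_ty n S \<and> wf_ty n T)"

fun wf_env :: "env \<Rightarrow> bool" where
  "wf_env [] = True"
| "wf_env (VarB T # \<Gamma>) = (wf_ty (ntv \<Gamma>) T \<and> wf_env \<Gamma>)"
| "wf_env (TVarB T # \<Gamma>) = (wf_ty (ntv \<Gamma>) T \<and> wf_env \<Gamma>)"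

text \<open>bound of type variable i, expressed relative to the whole context\<close>
fun tlookup :: "env \<Rightarrow> nat \<Rightarrow> ty option" where
  "tlookup [] i = None"
| "tlookup (VarB T # \<Gamma>) i = tlookup \<Gamma> i"
| "tlookup (TVarB T # \<Gamma>) i =
     (if i = 0 then Some (shift 1 0 T) else map_option (shift 1 0) (tlookup \<Gamma> (i - 1)))"

text \<open>type of term variable x, expressed relative to the whole context\<close>
fun vlookup :: "env \<Rightarrow> nat \<Rightarrow> ty option" where
  "vlookup [] x = None"
| "vlookup (VarB T # \<Gamma>) x = (if x = 0 then Some T else vlookup \<Gamma> (x - 1))"
| "vlookup (TVarB T # \<Gamma>) x = map_option (shift 1 0) (vlookup \<Gamma> x)"

inductive sub :: "env \<Rightarrow> ty \<Rightarrow> ty \<Rightarrow> bool" where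
  SVar: "wf_env \<Gamma> \<Longrightarrow> tlookup \<Gamma> i = Some U \<Longrightarrow> sub \<Gamma> (TVar i) U"
| STop: "wf_env \<Gamma> \<Longrightarrow> wf_ty (ntv \<Gamma>) S \<Longrightarrow> sub \<Gamma> S Top"
| SRefl: "wf_env \<Gamma> \<Longrightarrow> wf_ty (ntv \<Gamma>) S \<Longrightarrow> sub \<Gamma> S S"
| STrans: "sub \<Gamma> S U \<Longrightarrow> sub \<Gamma> U T \<Longrightarrow> sub \<Gamma> S T"
| SArr: "sub \<Gamma> S' S \<Longrightarrow> sub \<Gamma> T T' \<Longrightarrow> sub \<Gamma> (Arr S T) (Arr S' T')"
| SAll: "sub (TVarB Top # \<Gamma>) S T \<Longrightarrow> sub \<Gamma> (All S) (All T)"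
| SMeet1: "wf_env \<Gamma> \<Longrightarrow> wf_ty (ntv \<Gamma>) S \<Longrightarrow> wf_ty (ntv \<Gamma>) S' \<Longrightarrow> sub \<Gamma> (Meet S S') S"
| SMeet2: "wf_env \<Gamma> \<Longrightarrow> wf_ty (ntv \<Gamma>) S \<Longrightarrow> wf_ty (ntv \<Gamma>) S' \<Longrightarrow> sub \<Gamma> (Meet S S') S'"
| SMeetI: "sub \<Gamma> T S \<Longrightarrow> sub \<Gamma> T S' \<Longrightarrow> sub \<Gamma> T (Meet S S')"

inductive typing :: "env \<Rightarrow> tm \<Rightarrow> ty \<Rightarrow> bool" where
  TyTop: "wf_env \<Gamma> \<Longrightarrow> typing \<Gamma> TTop Top"
| TyVar: "wf_env \<Gamma> \<Longrightarrow> vlookup \<Gamma> x = Some T \<Longrightarrow> typing \<Gamma> (Var x) T"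
| TySub: "typing \<Gamma> t T \<Longrightarrow> sub \<Gamma> T T' \<Longrightarrow> typing \<Gamma> t T'"
| TyAbs: "typing (VarB S # \<Gamma>) t T \<Longrightarrow> typing \<Gamma> (Abs S t) (Arr S T)"
| TyApp: "typing \<Gamma> t (Arr S T) \<Longrightarrow> typing \<Gamma> s S \<Longrightarrow> typing \<Gamma> (App t s) T"
| TyTAbs: "typing (TVarB Top # \<Gamma>) t T \<Longrightarrow> typing \<Gamma> (TAbs Top t) (All T)"
  (* the rule for Lambda(X<:S).t yields forall(X<:S).T, which is a type of
     F-meet only for S = Top *)
| TyTApp: "typing \<Gamma> t (All T) \<Longrightarrow> sub \<Gamma> S' Top \<Longrightarrow> typing \<Gamma> (TApp t S') (subst 0 S' T)"

end

theory Submission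
  imports Defs
begin

text \<open>Substitute \<open>X \<and> S\<close> for \<open>X\<close> throughout the whole derivation of
  \<open>\<Theta>, X <: S \<turnstile> t : T\<close> while rebinding \<open>X\<close> with the bound \<open>\<top>\<close>. Every rule
  instance stays an instance of the same rule, since substitution commutes with
  itself and with the instantiation in the type-application rule, except the
  axiom \<open>X <: S\<close>, which becomes \<open>X \<and> S <: S\<close>, an instance of meet elimination.
  This yields \<open>\<Theta>, X <: \<top> \<turnstile> t[X \<and> S/X] : T[X \<and> S/X]\<close>, and \<open>\<forall>\<close>-introduction
  concludes.\<close>

text \<open>\<open>X \<and> S\<close> in the context \<open>\<Theta>, X\<close>. It is written with \<open>Suc 0\<close>, the simp normal
  form of \<open>1\<close>, so that it survives simplification unchanged.\<close>

abbreviation meet_bound :: "ty \<Rightarrow> ty" where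
  "meet_bound S \<equiv> Meet (TVar 0) (shift (Suc 0) 0 S)"

lemma wf_ty_mono: "wf_ty m T \<Longrightarrow> m \<le> n \<Longrightarrow> wf_ty n T"
  by (induction T arbitrary: m n) auto

lemma wf_ty_shift: "wf_ty n T \<Longrightarrow> wf_ty (n + d) (shift d c T)"
  by (induction T arbitrary: n c) (auto simp flip: add_Suc)

lemma wf_ty_repl: "wf_ty m U \<Longrightarrow> wf_ty n T \<Longrightarrow> k + m \<le> n \<Longrightarrow> wf_ty n (repl k U T)"
proof (induction T arbitrary: k n)
  case (TVar i)
  then show ?case
    using wf_ty_shift[of m U k 0] wf_ty_mono[of "m + k" "shift k 0 U" n] by (auto simp: add.commute)
qed auto

lemma shift_shift: "c' \<le> c \<Longrightarrow> c \<le> c' + k \<Longrightarrow> shift d c (shift k c' U) = shift (d + k) c' U"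
  by (induction U arbitrary: c c') auto

lemma repl_shift_id: "c \<le> k \<Longrightarrow> k < c + d \<Longrightarrow> repl k U (shift d c T) = shift d c T"
  by (induction T arbitrary: c k) auto

lemma shift_repl: "c \<le> k \<Longrightarrow> shift d c (repl k U T) = repl (k + d) U (shift d c T)"
  by (induction T arbitrary: c k) (auto simp: shift_shift add.commute)

lemma subst_shift_Suc: "c \<le> j \<Longrightarrow> j \<le> c + d \<Longrightarrow> subst j S (shift (Suc d) c T) = shift d c T"
  by (induction T arbitrary: c j) auto

lemma repl_subst:
  "repl (k + j) U (subst j S T) = subst j (repl k U S) (repl (Suc (k + j)) U T)"
proof (induction T arbitrary: j)
  case (TVar i)
  then show ?case
    using shift_repl[of 0 k j U S] subst_shift_Suc[of 0 j "k + j" "repl k U S" U] by auto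
next
  case (All T)
  then show ?case
    using All.IH[of "Suc j"] by simp
qed auto

fun repl_env :: "ty \<Rightarrow> env \<Rightarrow> env" where
  "repl_env U [] = []"
| "repl_env U (VarB T # \<Gamma>) = VarB (repl (ntv \<Gamma>) U T) # repl_env U \<Gamma>"
| "repl_env U (TVarB T # \<Gamma>) = TVarB (repl (ntv \<Gamma>) U T) # repl_env U \<Gamma>"

lemma ntv_repl_env [simp]: "ntv (repl_env U \<Gamma>) = ntv \<Gamma>"
  by (induction \<Gamma> rule: repl_env.induct) auto

lemma ntv_append [simp]: "ntv (\<Gamma> @ \<Delta>) = ntv \<Gamma> + ntv \<Delta>"
  by (induction \<Gamma> rule: ntv.induct) auto

lemma wf_env_appendD: "wf_env (\<Gamma> @ \<Delta>) \<Longrightarrow> wf_env \<Delta>"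
  by (induction \<Gamma> rule: ntv.induct) auto

lemma wf_env_repl_env:
  "wf_env (\<Gamma> @ TVarB S # \<Theta>) \<Longrightarrow> wf_ty (Suc (ntv \<Theta>)) U \<Longrightarrow>
   wf_env (repl_env U \<Gamma> @ TVarB Top # \<Theta>)"
  by (induction \<Gamma> rule: ntv.induct) (auto intro: wf_ty_repl)

lemma wf_ty_meet_bound_appendD:
  "wf_env (\<Gamma> @ TVarB S # \<Theta>) \<Longrightarrow> wf_ty (Suc (ntv \<Theta>)) (meet_bound S)"
  using wf_env_appendD[of \<Gamma> "TVarB S # \<Theta>"] wf_ty_shift[of "ntv \<Theta>" S 1 0] by simp

lemma wf_env_repl_meet_bound:
  "wf_env (\<Gamma> @ TVarB S # \<Theta>) \<Longrightarrow> wf_env (repl_env (meet_bound S) \<Gamma> @ TVarB Top # \<Theta>)"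
  by (blast intro: wf_env_repl_env wf_ty_meet_bound_appendD)

lemma wf_ty_repl_meet_bound:
  "wf_env (\<Gamma> @ TVarB S # \<Theta>) \<Longrightarrow> wf_ty (Suc (ntv \<Gamma> + ntv \<Theta>)) A \<Longrightarrow>
   wf_ty (Suc (ntv \<Gamma> + ntv \<Theta>)) (repl (ntv \<Gamma>) (meet_bound S) A)"
  using wf_ty_repl[OF wf_ty_meet_bound_appendD[of \<Gamma> S \<Theta>], of "Suc (ntv \<Gamma> + ntv \<Theta>)" A "ntv \<Gamma>"]
  by simp

lemma tlookup_append_ntv: "tlookup (\<Gamma> @ TVarB S # \<Theta>) (ntv \<Gamma>) = Some (shift (Suc (ntv \<Gamma>)) 0 S)"
  by (induction \<Gamma> rule: ntv.induct) (auto simp: shift_shift)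

lemma tlookup_repl_env:
  "tlookup (\<Gamma> @ TVarB S # \<Theta>) i = Some B \<Longrightarrow> i \<noteq> ntv \<Gamma> \<Longrightarrow>
   tlookup (repl_env U \<Gamma> @ TVarB Top # \<Theta>) i = Some (repl (ntv \<Gamma>) U B)"
proof (induction \<Gamma> arbitrary: i B rule: ntv.induct)
  case (3 T \<Gamma>)
  then show ?case
    using shift_repl[of 0 "ntv \<Gamma>" 1 U] by (cases i) auto
qed (auto simp: repl_shift_id)

lemma vlookup_repl_env:
  "vlookup (\<Gamma> @ TVarB S # \<Theta>) x = Some B \<Longrightarrow>
   vlookup (repl_env U \<Gamma> @ TVarB Top # \<Theta>) x = Some (repl (ntv \<Gamma>) U B)"
proof (induction \<Gamma> arbitrary: x B rule: ntv.induct)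
  case (3 T \<Gamma>)
  then show ?case
    using shift_repl[of 0 "ntv \<Gamma>" 1 U] by auto
qed (auto simp: repl_shift_id)

lemma sub_repl_meet_bound:
  assumes "sub (\<Gamma> @ TVarB S # \<Theta>) A B"
  shows "sub (repl_env (meet_bound S) \<Gamma> @ TVarB Top # \<Theta>)
           (repl (ntv \<Gamma>) (meet_bound S) A) (repl (ntv \<Gamma>) (meet_bound S) B)"
  using assms
proof (induction "\<Gamma> @ TVarB S # \<Theta>" A B arbitrary: \<Gamma> rule: sub.induct)
  case (SVar i B)
  show ?case
  proof (cases "i = ntv \<Gamma>")
    case True
    have bound: "B = shift (Suc (ntv \<Gamma>)) 0 S"
      using SVar(2) True by (simp add: tlookup_append_ntv)
    have "wf_ty (ntv \<Theta>) S"
      using wf_env_appendD[OF SVar(1)] by simp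
    then have "wf_ty (Suc (ntv \<Gamma> + ntv \<Theta>)) B"
      using bound wf_ty_shift[of "ntv \<Theta>" S "Suc (ntv \<Gamma>)" 0] by (simp add: add.commute)
    then have "sub (repl_env (meet_bound S) \<Gamma> @ TVarB Top # \<Theta>) (Meet (TVar (ntv \<Gamma>)) B) B"
      using wf_env_repl_meet_bound[OF SVar(1)] by (simp add: sub.SMeet2)
    moreover have "repl (ntv \<Gamma>) (meet_bound S) (TVar i) = Meet (TVar (ntv \<Gamma>)) B"
      using True bound by (simp add: shift_shift)
    moreover have "repl (ntv \<Gamma>) (meet_bound S) B = B"
      using bound by (simp add: repl_shift_id)
    ultimately show ?thesis
      by simp
  next
    case False
    then show ?thesis
      using SVar wf_env_repl_meet_bound[of \<Gamma> S \<Theta>] by (auto intro: sub.SVar tlookup_repl_env)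
  qed
next
  case (SAll S' T)
  then show ?case
    using SAll.hyps(2)[of "TVarB Top # \<Gamma>"] by (simp add: sub.SAll)
qed (auto intro: sub.STrans sub.SArr sub.SMeetI
          simp: sub.STop sub.SRefl sub.SMeet1 sub.SMeet2 wf_env_repl_meet_bound wf_ty_repl_meet_bound)

lemma typing_repl_meet_bound:
  assumes "typing (\<Gamma> @ TVarB S # \<Theta>) t T"
  shows "typing (repl_env (meet_bound S) \<Gamma> @ TVarB Top # \<Theta>)
           (repl_tm (ntv \<Gamma>) (meet_bound S) t) (repl (ntv \<Gamma>) (meet_bound S) T)"
  using assms
proof (induction "\<Gamma> @ TVarB S # \<Theta>" t T arbitrary: \<Gamma> rule: typing.induct)
  case (TyAbs S' t T)
  then show ?case
    using TyAbs.hyps(2)[of "VarB S' # \<Gamma>"] by (simp add: typing.TyAbs)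
next
  case (TySub t T T')
  then show ?case
    using sub_repl_meet_bound typing.TySub by blast
next
  case (TyTAbs t T)
  then show ?case
    using TyTAbs.hyps(2)[of "TVarB Top # \<Gamma>"] by (simp add: typing.TyTAbs)
next
  case (TyTApp t T S')
  then show ?case
    using typing.TyTApp sub_repl_meet_bound[OF TyTApp(3)] repl_subst[of "ntv \<Gamma>" 0 _ S' T]
    by fastforce
qed (auto intro: typing.intros sub_repl_meet_bound vlookup_repl_env
          wf_env_repl_meet_bound)

theorem proposition5p4:
  assumes "typing (TVarB S # \<Theta>) t T"
  shows "typing \<Theta> (TAbs Top (repl_tm 0 (Meet (TVar 0) (shift 1 0 S)) t))
                    (All (repl 0 (Meet (TVar 0) (shift 1 0 S)) T))"
  using typing_repl_meet_bound[where \<Gamma> = "[]"] assms typing.TyTAbs by simp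

end
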